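(* Let $H$ be a graph obtained from a path $w_1w_2\cdots w_7$ by adding the edges of a matching $M$ on $\{w_1,\dots,w_7\}$. Then $H$ has a stable set $S$ with $|S|=3$ and $\{w_1,w_7\}\setminus S\neq\emptyset$.
   Context: A matching is a set of pairwise disjoint edges. A stable set is a set of pairwise non-adjacent vertices. Graphs are simple. *)

theory Defs
  imports Main
begin

definition matching_on :: "'a set set \<Rightarrow> 'a set \<Rightarrow> bool" where
  "matching_on M V \<longleftrightarrow> (\<forall>e\<in>M. e \<subseteq> V \<and> card e = 2) \<and>
     (\<forall>e\<in>M. \<forall>f\<in>M. e \<noteq> f \<longrightarrow> e \<inter> f = {})"

text \<open>Edges of the path w1 w2 ... w7 (vertex wi is represented by i) plus the edges of M.\<close>
definition path7_plus :: "nat set set \<Rightarrow> nat set set" where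
  "path7_plus M = {{i, Suc i} | i. 1 \<le> i \<and> i < 7} \<union> M"

definition stable_set :: "'a set \<Rightarrow> 'a set set \<Rightarrow> 'a set \<Rightarrow> bool" where
  "stable_set V E S \<longleftrightarrow> S \<subseteq> V \<and> (\<forall>u\<in>S. \<forall>v\<in>S. {u, v} \<notin> E)"

end

theory Submission
  imports Defs
begin

text \<open>If no 3-set avoiding one of \<open>w\<^sub>1, w\<^sub>7\<close> were stable, then every such 3-set without two
  consecutive vertices would span an edge of \<open>M\<close>. Since \<open>M\<close> is a matching, the triple
  \<open>{2,4,6}\<close> spans exactly one edge of \<open>M\<close>, and in each of the three cases two or three further
  triples among \<open>{1,3,5}, {1,3,6}, {1,4,6}, {2,4,7}, {2,5,7}, {3,5,7}\<close> have their edge of \<open>M\<close>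
  forced until one of them has none left.\<close>

lemma matching_on_edges_meet_eq:
  assumes "matching_on M V" "e \<in> M" "f \<in> M" "x \<in> e" "x \<in> f"
  shows "e = f"
  using assms unfolding matching_on_def by blast

lemma matching_on_no_loop:
  assumes "matching_on M V"
  shows "{a, a} \<notin> M"
  using assms unfolding matching_on_def by fastforce

lemma stable_set_path7_plusI:
  assumes "matching_on M V" "S \<subseteq> {1..7}" "\<forall>u\<in>S. Suc u \<notin> S"
    and "\<forall>u\<in>S. \<forall>v\<in>S. u \<noteq> v \<longrightarrow> {u, v} \<notin> M"
  shows "stable_set {1..7} (path7_plus M) S"
  unfolding stable_set_def path7_plus_def
proof (intro conjI ballI \<open>S \<subseteq> {1..7}\<close>)
  fix u v assume "u \<in> S" "v \<in> S"
  then have "{u, v} \<noteq> {i, Suc i}" for i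
    using assms(3) by (auto simp: doubleton_eq_iff)
  moreover have "{u, v} \<notin> M"
    using assms(4) matching_on_no_loop[OF assms(1)] \<open>u \<in> S\<close> \<open>v \<in> S\<close> by (cases "u = v") auto
  ultimately show "{u, v} \<notin> {{i, Suc i} |i. 1 \<le> i \<and> i < 7} \<union> M" by blast
qed

lemma no_matching_meets_all_path7_triples:
  fixes M :: "nat set set"
  assumes "matching_on M V"
    and "{1,3} \<in> M \<or> {1,5} \<in> M \<or> {3,5} \<in> M"
    and "{1,3} \<in> M \<or> {1,6} \<in> M \<or> {3,6} \<in> M"
    and "{1,4} \<in> M \<or> {1,6} \<in> M \<or> {4,6} \<in> M"
    and "{2,4} \<in> M \<or> {2,6} \<in> M \<or> {4,6} \<in> M"
    and "{2,4} \<in> M \<or> {2,7} \<in> M \<or> {4,7} \<in> M"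
    and "{2,5} \<in> M \<or> {2,7} \<in> M \<or> {5,7} \<in> M"
    and "{3,5} \<in> M \<or> {3,7} \<in> M \<or> {5,7} \<in> M"
  shows False
proof -
  note meet = matching_on_edges_meet_eq[OF assms(1)]
  from assms(5) show False
  proof (elim disjE)
    assume e24: "{2,4} \<in> M"
    then have e16: "{1,6} \<in> M"
      using assms(4) meet[OF e24, of "{1,4}" 4] meet[OF e24, of "{4,6}" 4]
      by (auto simp: doubleton_eq_iff)
    have e35: "{3,5} \<in> M"
      using assms(2) meet[OF e16, of "{1,3}" 1] meet[OF e16, of "{1,5}" 1]
      by (auto simp: doubleton_eq_iff)
    show False
      using assms(7) meet[OF e24, of "{2,5}" 2] meet[OF e24, of "{2,7}" 2] meet[OF e35, of "{5,7}" 5]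
      by (auto simp: doubleton_eq_iff)
  next
    assume e26: "{2,6} \<in> M"
    then have e47: "{4,7} \<in> M"
      using assms(6) meet[OF e26, of "{2,4}" 2] meet[OF e26, of "{2,7}" 2]
      by (auto simp: doubleton_eq_iff)
    show False
      using assms(4) meet[OF e47, of "{1,4}" 4] meet[OF e26, of "{1,6}" 6] meet[OF e26, of "{4,6}" 6]
      by (auto simp: doubleton_eq_iff)
  next
    assume e46: "{4,6} \<in> M"
    then have e27: "{2,7} \<in> M"
      using assms(6) meet[OF e46, of "{2,4}" 4] meet[OF e46, of "{4,7}" 4]
      by (auto simp: doubleton_eq_iff)
    have e13: "{1,3} \<in> M"
      using assms(3) meet[OF e46, of "{1,6}" 6] meet[OF e46, of "{3,6}" 6]
      by (auto simp: doubleton_eq_iff)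
    show False
      using assms(8) meet[OF e13, of "{3,5}" 3] meet[OF e13, of "{3,7}" 3] meet[OF e27, of "{5,7}" 7]
      by (auto simp: doubleton_eq_iff)
  qed
qed

theorem lemma18:
  fixes M :: "nat set set"
  assumes "matching_on M {1..7}"
  shows "\<exists>S. stable_set {1..7} (path7_plus M) S \<and> card S = 3 \<and> {1, 7} - S \<noteq> {}"
proof (rule ccontr)
  assume none: "\<not> ?thesis"
  have chord: "{a, b} \<in> M \<or> {a, c} \<in> M \<or> {b, c} \<in> M"
    if "{a, b, c} \<subseteq> {1..7}" "\<forall>u\<in>{a, b, c}. Suc u \<notin> {a, b, c}"
      "card {a, b, c} = 3" "{1, 7} - {a, b, c} \<noteq> {}" for a b c :: nat
  proof -
    have "\<not> stable_set {1..7} (path7_plus M) {a, b, c}"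
      using none that(3,4) by blast
    then have "\<not> (\<forall>u\<in>{a, b, c}. \<forall>v\<in>{a, b, c}. u \<noteq> v \<longrightarrow> {u, v} \<notin> M)"
      using stable_set_path7_plusI[OF assms that(1,2)] by blast
    then show ?thesis by (auto simp: insert_commute)
  qed
  show False
    by (rule no_matching_meets_all_path7_triples[OF assms]; rule chord; simp)
qed

end
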